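(* Suppose Assumptions 1–4 hold, that (i) $E[Y^4]<\infty$, $E\|X\|^4<\infty$ and $E[s(X'\gamma)^4]<\infty$ for all $\gamma\in\Theta_\gamma$, and (ii) there is $(\beta_0,\gamma_0)\in\Theta$ such that, almost surely, $\mu(X)=X'\beta_0$ and $\sigma(X)^2=s(X'\gamma_0)^2$. Then the minimization of $Q(\theta)$ over $\Theta$ is equivalent to the (infeasible) sequential procedure with first step $$\beta_0=\arg\min_{\beta\in\mathbb{R}^k}E\Big[\frac{1}{\sigma(X)}(Y-X'\beta)^2\Big]$$ and second step $$\gamma_0=\arg\min_{\gamma\in\Theta_\gamma}E\Big[\frac{1}{\sigma(X)^3}\big\{(Y-X'\beta_0)^2-s(X'\gamma)^2\big\}^2\Big],$$ in the sense that the first-order conditions of the two steps are satisfied at $(\beta_0,\gamma_0)$ and coincide there with the first-order conditions of the minimization of $Q$, whose unique solution is $(\beta_0,\gamma_0)$.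
   Context: Let $Y$ be a scalar random variable and $X$ a random $k\times1$ vector whose first component equals $1$; let $\mathcal{X}$ denote the support of $X$. Write $\mu(X)=E[Y\mid X]$ and $\sigma(X)^2=E[(Y-\mu(X))^2\mid X]$. Let $s$ be a positive scale function, write $s_j(t)=\partial^j s(t)/\partial t^j$ for $j=1,2,3$, and set $\Theta_\gamma=\{\gamma\in\mathbb{R}^k:\Pr[s(X'\gamma)>0]=1\}$ and $\Theta=\mathbb{R}^k\times\Theta_\gamma$. For $\theta=(\beta,\gamma)\in\Theta$ put $e(Y,X,\theta)=(Y-X'\beta)/s(X'\gamma)$ and $Q(\theta)=E\big[\tfrac12\{e(Y,X,\theta)^2+1\}s(X'\gamma)\big]$. Assumption 1: for $a=0$ or $a=-\infty$, $s:(a,\infty)\to(0,\infty)$ is three times differentiable, strictly increasing and convex, with $\lim_{t\to a}s(t)=0$ and $\lim_{t\to\infty}s(t)=\infty$. Assumption 2: $x\mapsto\sigma(x)^2$ is bounded away from $0$ uniformly on $\mathcal{X}$. Assumption 3: (i) $E[Y^4]<\infty$ and $E\|X\|^4<\infty$; (ii) for all $\gamma\in\Theta_\gamma$, $E[\|X\|^4s_2(X'\gamma)^2]<\infty$, $E[\|X\|^6s_3(X'\gamma)^2]<\infty$ and $E[\|X\|^6s_1(X'\gamma)^2s_2(X'\gamma)^2]<\infty$. Assumption 4: for all $\gamma\in\Theta_\gamma$, $E[XX'/s(X'\gamma)]$ is nonsingular. *)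

theory Defs
  imports "HOL-Probability.Probability"
begin

definition sdom :: "ereal \<Rightarrow> real set" where
  "sdom a = {t. a < ereal t}"

definition assumption1 ::
  "ereal \<Rightarrow> (real \<Rightarrow> real) \<Rightarrow> (real \<Rightarrow> real) \<Rightarrow> (real \<Rightarrow> real) \<Rightarrow> (real \<Rightarrow> real) \<Rightarrow> bool" where
  "assumption1 a s s1 s2 s3 \<longleftrightarrow>
     (a = 0 \<or> a = -\<infinity>) \<and>
     (\<forall>t\<in>sdom a. s t > 0) \<and>
     (\<forall>t\<in>sdom a. (s has_real_derivative s1 t) (at t)) \<and>
     (\<forall>t\<in>sdom a. (s1 has_real_derivative s2 t) (at t)) \<and>
     (\<forall>t\<in>sdom a. (s2 has_real_derivative s3 t) (at t)) \<and>
     strict_mono_on (sdom a) s \<and>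
     convex_on (sdom a) s \<and>
     (if a = 0 then (s \<longlongrightarrow> 0) (at_right 0) else (s \<longlongrightarrow> 0) at_bot) \<and>
     filterlim s at_top at_top"

definition sigX :: "'w measure \<Rightarrow> ('w \<Rightarrow> real^'k) \<Rightarrow> 'w measure" where
  "sigX M X = vimage_algebra (space M) X borel"

definition muX :: "'w measure \<Rightarrow> ('w \<Rightarrow> real^'k) \<Rightarrow> ('w \<Rightarrow> real) \<Rightarrow> 'w \<Rightarrow> real" where
  "muX M X Y = real_cond_exp M (sigX M X) Y"

definition sigma2X :: "'w measure \<Rightarrow> ('w \<Rightarrow> real^'k) \<Rightarrow> ('w \<Rightarrow> real) \<Rightarrow> 'w \<Rightarrow> real" where
  "sigma2X M X Y = real_cond_exp M (sigX M X) (\<lambda>w. (Y w - muX M X Y w)^2)"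

definition sigmaX :: "'w measure \<Rightarrow> ('w \<Rightarrow> real^'k) \<Rightarrow> ('w \<Rightarrow> real) \<Rightarrow> 'w \<Rightarrow> real" where
  "sigmaX M X Y w = sqrt (sigma2X M X Y w)"

definition Theta_gamma :: "'w measure \<Rightarrow> ('w \<Rightarrow> real^'k) \<Rightarrow> ereal \<Rightarrow> (real \<Rightarrow> real) \<Rightarrow> (real^'k) set" where
  "Theta_gamma M X a s =
     {\<gamma>. prob_space.prob M {w \<in> space M. X w \<bullet> \<gamma> \<in> sdom a \<and> s (X w \<bullet> \<gamma>) > 0} = 1}"

definition Theta :: "'w measure \<Rightarrow> ('w \<Rightarrow> real^'k) \<Rightarrow> ereal \<Rightarrow> (real \<Rightarrow> real) \<Rightarrow> ((real^'k) \<times> (real^'k)) set" where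
  "Theta M X a s = UNIV \<times> Theta_gamma M X a s"

text \<open>e(Y,X,theta) and the objective Q(theta) (an extended nonnegative expectation,
  so that Q may take the value infinity).\<close>
definition eres :: "(real \<Rightarrow> real) \<Rightarrow> real \<Rightarrow> real^'k \<Rightarrow> (real^'k) \<times> (real^'k) \<Rightarrow> real" where
  "eres s y x \<theta> = (y - x \<bullet> fst \<theta>) / s (x \<bullet> snd \<theta>)"

definition Qobj :: "'w measure \<Rightarrow> ('w \<Rightarrow> real^'k) \<Rightarrow> ('w \<Rightarrow> real) \<Rightarrow> (real \<Rightarrow> real)
     \<Rightarrow> (real^'k) \<times> (real^'k) \<Rightarrow> ennreal" where
  "Qobj M X Y s \<theta> =
     (\<integral>\<^sup>+ w. ennreal ((1/2) * ((eres s (Y w) (X w) \<theta>)^2 + 1) * s (X w \<bullet> snd \<theta>)) \<partial>M)"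

definition step1obj :: "'w measure \<Rightarrow> ('w \<Rightarrow> real^'k) \<Rightarrow> ('w \<Rightarrow> real) \<Rightarrow> real^'k \<Rightarrow> ennreal" where
  "step1obj M X Y \<beta> =
     (\<integral>\<^sup>+ w. ennreal ((Y w - X w \<bullet> \<beta>)^2 / sigmaX M X Y w) \<partial>M)"

definition step2obj :: "'w measure \<Rightarrow> ('w \<Rightarrow> real^'k) \<Rightarrow> ('w \<Rightarrow> real) \<Rightarrow> (real \<Rightarrow> real)
     \<Rightarrow> real^'k \<Rightarrow> real^'k \<Rightarrow> ennreal" where
  "step2obj M X Y s \<beta> \<gamma> =
     (\<integral>\<^sup>+ w. ennreal (((Y w - X w \<bullet> \<beta>)^2 - (s (X w \<bullet> \<gamma>))^2)^2 / (sigmaX M X Y w)^3) \<partial>M)"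

text \<open>Gradients (first-order conditions), obtained by differentiating under the expectation.\<close>
definition grad_step1 :: "'w measure \<Rightarrow> ('w \<Rightarrow> real^'k) \<Rightarrow> ('w \<Rightarrow> real) \<Rightarrow> real^'k \<Rightarrow> real^'k" where
  "grad_step1 M X Y \<beta> =
     (\<chi> i. \<integral> w. -2 * X w $ i * (Y w - X w \<bullet> \<beta>) / sigmaX M X Y w \<partial>M)"

definition grad_step2 :: "'w measure \<Rightarrow> ('w \<Rightarrow> real^'k) \<Rightarrow> ('w \<Rightarrow> real) \<Rightarrow> (real \<Rightarrow> real) \<Rightarrow> (real \<Rightarrow> real)
     \<Rightarrow> real^'k \<Rightarrow> real^'k \<Rightarrow> real^'k" where
  "grad_step2 M X Y s s1 \<beta> \<gamma> =
     (\<chi> i. \<integral> w. -4 * ((Y w - X w \<bullet> \<beta>)^2 - (s (X w \<bullet> \<gamma>))^2) * s (X w \<bullet> \<gamma>) * s1 (X w \<bullet> \<gamma>)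
                  * X w $ i / (sigmaX M X Y w)^3 \<partial>M)"

definition gradQ_beta :: "'w measure \<Rightarrow> ('w \<Rightarrow> real^'k) \<Rightarrow> ('w \<Rightarrow> real) \<Rightarrow> (real \<Rightarrow> real)
     \<Rightarrow> (real^'k) \<times> (real^'k) \<Rightarrow> real^'k" where
  "gradQ_beta M X Y s \<theta> = (\<chi> i. \<integral> w. - X w $ i * eres s (Y w) (X w) \<theta> \<partial>M)"

definition gradQ_gamma :: "'w measure \<Rightarrow> ('w \<Rightarrow> real^'k) \<Rightarrow> ('w \<Rightarrow> real) \<Rightarrow> (real \<Rightarrow> real) \<Rightarrow> (real \<Rightarrow> real)
     \<Rightarrow> (real^'k) \<times> (real^'k) \<Rightarrow> real^'k" where
  "gradQ_gamma M X Y s s1 \<theta> =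
     (\<chi> i. \<integral> w. (1/2) * (1 - (eres s (Y w) (X w) \<theta>)^2) * s1 (X w \<bullet> snd \<theta>) * X w $ i \<partial>M)"

end

theory Submission
  imports Defs
begin

text \<open>Conditioning on \<open>X\<close> turns every objective into the expectation of an explicit function
  of \<open>X\<close>. With \<open>e = Y - X'\<beta>\<^sub>0\<close>, \<open>\<sigma>\<^sub>0 = s(X'\<gamma>\<^sub>0)\<close>, \<open>d = X'(\<beta>\<^sub>0 - \<beta>)\<close> and
  \<open>W = E[(e\<^sup>2 - \<sigma>\<^sub>0\<^sup>2)\<^sup>2 | X]\<close> one has \<open>E[(Y - X'\<beta>)\<^sup>2 | X] = \<sigma>\<^sub>0\<^sup>2 + d\<^sup>2\<close>, hence
  \<open>Q(\<beta>, \<gamma>) = E[\<sigma>\<^sub>0 + ((s(X'\<gamma>) - \<sigma>\<^sub>0)\<^sup>2 + d\<^sup>2) / (2 s(X'\<gamma>))]\<close>,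
  the first-step objective is \<open>E[\<sigma>\<^sub>0 + d\<^sup>2 / \<sigma>\<^sub>0]\<close> and the second-step objective is
  \<open>E[(W + (\<sigma>\<^sub>0\<^sup>2 - s(X'\<gamma>)\<^sup>2)\<^sup>2) / \<sigma>\<^sub>0\<^sup>3]\<close>. Each is its value at the truth plus the
  expectation of a nonnegative excess that vanishes almost surely only if \<open>X'\<beta> = X'\<beta>\<^sub>0\<close> and
  \<open>s(X'\<gamma>) = \<sigma>\<^sub>0\<close>; nonsingularity of \<open>E[XX'/\<sigma>\<^sub>0]\<close> and injectivity of \<open>s\<close> then force
  \<open>\<beta> = \<beta>\<^sub>0\<close> and \<open>\<gamma> = \<gamma>\<^sub>0\<close>. At the truth every gradient is the expectation of an
  \<open>X\<close>-measurable multiple of \<open>e\<close> or of \<open>e\<^sup>2 - \<sigma>\<^sub>0\<^sup>2\<close>, whose conditional means vanish.\<close>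

lemma abs_mult_le_sum_squares: "\<bar>(x::real) * y\<bar> \<le> x\<^sup>2 + y\<^sup>2"
  using sum_squares_bound[of "\<bar>x\<bar>" "\<bar>y\<bar>"] zero_le_mult_iff[of "\<bar>x\<bar>" "\<bar>y\<bar>"]
  unfolding abs_mult power2_abs by linarith

lemma square_add_le: "((x::real) + y)\<^sup>2 \<le> 2 * (x\<^sup>2 + y\<^sup>2)"
  using sum_squares_bound[of x y] by (simp add: power2_sum)

lemma power4_add_le: "((x::real) + y) ^ 4 \<le> 8 * (x ^ 4 + y ^ 4)"
proof -
  have "(x + y) ^ 4 = ((x + y)\<^sup>2)\<^sup>2" by simp
  also have "\<dots> \<le> (2 * (x\<^sup>2 + y\<^sup>2))\<^sup>2" by (rule power_mono[OF square_add_le]) simp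
  also have "\<dots> = 4 * (x\<^sup>2 + y\<^sup>2)\<^sup>2" by (subst power_mult_distrib) simp
  also have "\<dots> \<le> 4 * (2 * ((x\<^sup>2)\<^sup>2 + (y\<^sup>2)\<^sup>2))" using square_add_le[of "x\<^sup>2" "y\<^sup>2"] by simp
  finally show ?thesis by simp
qed

lemma integrable_mult_of_square_integrable:
  fixes f g :: "'a \<Rightarrow> real"
  assumes [measurable]: "f \<in> borel_measurable M" "g \<in> borel_measurable M"
    and "integrable M (\<lambda>x. (f x)\<^sup>2)" "integrable M (\<lambda>x. (g x)\<^sup>2)"
  shows "integrable M (\<lambda>x. f x * g x)"
proof (rule Bochner_Integration.integrable_bound)
  show "integrable M (\<lambda>x. (f x)\<^sup>2 + (g x)\<^sup>2)" using assms(3,4) by (rule Bochner_Integration.integrable_add)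
  show "AE x in M. norm (f x * g x) \<le> norm ((f x)\<^sup>2 + (g x)\<^sup>2)"
    by (intro AE_I2) (metis abs_mult_le_sum_squares real_norm_def abs_ge_self order_trans)
qed measurable

lemma square_integrable_add:
  fixes f g :: "'a \<Rightarrow> real"
  assumes [measurable]: "f \<in> borel_measurable M" "g \<in> borel_measurable M"
    and "integrable M (\<lambda>x. (f x)\<^sup>2)" "integrable M (\<lambda>x. (g x)\<^sup>2)"
  shows "integrable M (\<lambda>x. (f x + g x)\<^sup>2)"
proof (rule Bochner_Integration.integrable_bound)
  show "integrable M (\<lambda>x. 2 * ((f x)\<^sup>2 + (g x)\<^sup>2))" using assms(3,4) by simp
  show "AE x in M. norm ((f x + g x)\<^sup>2) \<le> norm (2 * ((f x)\<^sup>2 + (g x)\<^sup>2))"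
    by (intro AE_I2) (metis real_norm_def square_add_le abs_ge_self order_trans zero_le_power2 abs_of_nonneg)
qed measurable

lemma power4_integrable_add:
  fixes f g :: "'a \<Rightarrow> real"
  assumes [measurable]: "f \<in> borel_measurable M" "g \<in> borel_measurable M"
    and "integrable M (\<lambda>x. f x ^ 4)" "integrable M (\<lambda>x. g x ^ 4)"
  shows "integrable M (\<lambda>x. (f x + g x) ^ 4)"
proof (rule Bochner_Integration.integrable_bound)
  show "integrable M (\<lambda>x. 8 * (f x ^ 4 + g x ^ 4))" using assms(3,4) by simp
  show "AE x in M. norm ((f x + g x) ^ 4) \<le> norm (8 * (f x ^ 4 + g x ^ 4))"
    using power4_add_le[of "f x" "g x" for x] by (intro AE_I2) (simp add: abs_le_iff)
qed measurable

lemma (in finite_measure) power4_integrable_imp_square_integrable: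
  fixes f :: "'a \<Rightarrow> real"
  assumes [measurable]: "f \<in> borel_measurable M" and "integrable M (\<lambda>x. f x ^ 4)"
  shows "integrable M (\<lambda>x. (f x)\<^sup>2)"
proof (rule square_integrable_imp_integrable)
  show "integrable M (\<lambda>x. ((f x)\<^sup>2)\<^sup>2)"
    using assms(2) by (simp add: power_mult[symmetric])
qed measurable

lemma square_integrable_diff_squares:
  fixes f g :: "'a \<Rightarrow> real"
  assumes [measurable]: "f \<in> borel_measurable M" "g \<in> borel_measurable M"
    and "integrable M (\<lambda>x. f x ^ 4)" "integrable M (\<lambda>x. g x ^ 4)"
  shows "integrable M (\<lambda>x. ((f x)\<^sup>2 - (g x)\<^sup>2)\<^sup>2)"
proof -
  have "integrable M (\<lambda>x. ((f x)\<^sup>2 + - (g x)\<^sup>2)\<^sup>2)"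
    by (rule square_integrable_add) (use assms(3,4) in \<open>simp_all flip: power_mult\<close>)
  then show ?thesis by simp
qed

lemma nn_integral_less_add:
  fixes f q :: "'a \<Rightarrow> real"
  assumes [measurable]: "f \<in> borel_measurable M" "q \<in> borel_measurable M"
    and f: "integrable M f" and f_nonneg: "AE x in M. 0 \<le> f x"
    and q_nonneg: "AE x in M. 0 \<le> q x" and q_nonzero: "\<not> (AE x in M. q x = 0)"
  shows "(\<integral>\<^sup>+x. ennreal (f x) \<partial>M) < (\<integral>\<^sup>+x. ennreal (f x + q x) \<partial>M)"
proof (rule nn_integral_less)
  show "(\<lambda>x. ennreal (f x)) \<in> borel_measurable M" "(\<lambda>x. ennreal (f x + q x)) \<in> borel_measurable M"
    by measurable
  show "(\<integral>\<^sup>+x. ennreal (f x) \<partial>M) \<noteq> \<infinity>"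
    using nn_integral_eq_integral[OF f f_nonneg] by simp
  show "AE x in M. ennreal (f x) \<le> ennreal (f x + q x)"
    using q_nonneg by eventually_elim (rule ennreal_leI, simp)
  show "\<not> (AE x in M. ennreal (f x + q x) \<le> ennreal (f x))"
  proof
    assume "AE x in M. ennreal (f x + q x) \<le> ennreal (f x)"
    with f_nonneg q_nonneg have "AE x in M. q x = 0"
      by eventually_elim (simp add: ennreal_le_iff)
    with q_nonzero show False ..
  qed
qed

lemma vector_eq_0_of_AE_inner_eq_0:
  fixes X :: "'w \<Rightarrow> real^'k" and q :: "'w \<Rightarrow> real"
  assumes integrable: "\<forall>i j. integrable M (\<lambda>w. X w $ i * X w $ j / q w)"
    and invertible: "invertible (\<chi> i j. \<integral>w. X w $ i * X w $ j / q w \<partial>M)"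
    and orthogonal: "AE w in M. X w \<bullet> v = 0"
  shows "v = 0"
proof -
  let ?A = "\<chi> i j. \<integral>w. X w $ i * X w $ j / q w \<partial>M"
  have "(?A *v v) $ i = 0" for i
  proof -
    have "(?A *v v) $ i = (\<Sum>j\<in>UNIV. (\<integral>w. X w $ i * X w $ j / q w \<partial>M) * v $ j)"
      by (simp add: matrix_vector_mult_def)
    also have "\<dots> = (\<Sum>j\<in>UNIV. \<integral>w. X w $ i * X w $ j / q w * v $ j \<partial>M)"
      by (simp only: integral_mult_left_zero)
    also have "\<dots> = (\<integral>w. (\<Sum>j\<in>UNIV. X w $ i * X w $ j / q w * v $ j) \<partial>M)"
      using integrable by (intro Bochner_Integration.integral_sum[symmetric] integrable_mult_left) blast
    also have "\<dots> = 0"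
    proof (rule integral_eq_zero_AE)
      show "AE w in M. (\<Sum>j\<in>UNIV. X w $ i * X w $ j / q w * v $ j) = 0"
        using orthogonal
      proof eventually_elim
        case (elim w)
        have "(\<Sum>j\<in>UNIV. X w $ i * X w $ j / q w * v $ j) = X w $ i / q w * (X w \<bullet> v)"
          by (simp add: inner_vec_def sum_distrib_left algebra_simps)
        with elim show ?case by simp
      qed
    qed
    finally show ?thesis .
  qed
  then have "?A *v v = 0" by (simp add: vec_eq_iff)
  moreover have "\<forall>x. ?A *v x = 0 \<longrightarrow> x = 0"
    using invertible by (simp add: invertible_left_inverse matrix_left_invertible_ker[symmetric])
  ultimately show ?thesis by blast
qed

context sigma_finite_subalgebra
begin

lemma nn_integral_mult_real_cond_exp:
  assumes [measurable]: "f \<in> borel_measurable F" and f_nonneg: "\<And>x. 0 \<le> f x"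
    and g: "integrable M g" and g_nonneg: "\<And>x. 0 \<le> g x"
  shows "(\<integral>\<^sup>+x. ennreal (f x * g x) \<partial>M) = (\<integral>\<^sup>+x. ennreal (f x * real_cond_exp M F g x) \<partial>M)"
proof -
  have [measurable]: "g \<in> borel_measurable M" using g by auto
  have "(\<lambda>x. ennreal (- g x)) = (\<lambda>x. 0)"
    using g_nonneg by (simp add: ennreal_neg)
  moreover have "AE x in M. 0 = nn_cond_exp M F (\<lambda>x. 0) x"
    by (rule nn_cond_exp_F_meas) simp
  ultimately have neg_part: "AE x in M. nn_cond_exp M F (\<lambda>x. ennreal (- g x)) x = 0"
    by simp
  have "(\<integral>\<^sup>+x. nn_cond_exp M F (\<lambda>x. ennreal (g x)) x \<partial>M) = (\<integral>\<^sup>+x. ennreal (g x) \<partial>M)"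
    using nn_cond_exp_intg[of "\<lambda>_. 1" "\<lambda>x. ennreal (g x)"] by simp
  also have "\<dots> < \<infinity>"
    using g g_nonneg by (simp add: integrable_iff_bounded)
  finally have "AE x in M. nn_cond_exp M F (\<lambda>x. ennreal (g x)) x \<noteq> \<infinity>"
    by (intro nn_integral_PInf_AE) auto
  with neg_part have pos_part:
    "AE x in M. ennreal (real_cond_exp M F g x) = nn_cond_exp M F (\<lambda>x. ennreal (g x)) x"
    by eventually_elim (simp add: real_cond_exp_def ennreal_enn2real_if)
  have "(\<integral>\<^sup>+x. ennreal (f x * real_cond_exp M F g x) \<partial>M)
      = (\<integral>\<^sup>+x. ennreal (f x) * nn_cond_exp M F (\<lambda>x. ennreal (g x)) x \<partial>M)"
    by (rule nn_integral_cong_AE) (use pos_part in \<open>eventually_elim, simp add: ennreal_mult' f_nonneg\<close>)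
  also have "\<dots> = (\<integral>\<^sup>+x. ennreal (f x) * ennreal (g x) \<partial>M)"
    by (rule nn_cond_exp_intg) simp_all
  also have "\<dots> = (\<integral>\<^sup>+x. ennreal (f x * g x) \<partial>M)"
    by (simp add: ennreal_mult' f_nonneg)
  finally show ?thesis ..
qed

lemma nn_integral_mult_real_cond_exp_add:
  assumes [measurable]: "f \<in> borel_measurable F" and f_nonneg: "\<And>x. 0 \<le> f x"
    and g: "integrable M g" and g_nonneg: "\<And>x. 0 \<le> g x"
    and [measurable]: "h \<in> borel_measurable M" and h_nonneg: "\<And>x. 0 \<le> h x"
  shows "(\<integral>\<^sup>+x. ennreal (f x * g x + h x) \<partial>M)
       = (\<integral>\<^sup>+x. ennreal (f x * real_cond_exp M F g x + h x) \<partial>M)"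
proof -
  have [measurable]: "f \<in> borel_measurable M" by (rule measurable_from_subalg[OF subalg]) simp
  have [measurable]: "g \<in> borel_measurable M" using g by auto
  have cond_nonneg: "AE x in M. 0 \<le> real_cond_exp M F g x"
    by (rule real_cond_exp_pos) (use g_nonneg in simp_all)
  have "(\<integral>\<^sup>+x. ennreal (f x * g x + h x) \<partial>M) = (\<integral>\<^sup>+x. ennreal (f x * g x) + ennreal (h x) \<partial>M)"
    by (intro nn_integral_cong) (simp add: ennreal_plus f_nonneg g_nonneg h_nonneg)
  also have "\<dots> = (\<integral>\<^sup>+x. ennreal (f x * g x) \<partial>M) + (\<integral>\<^sup>+x. ennreal (h x) \<partial>M)"
    by (rule nn_integral_add) measurable
  also have "(\<integral>\<^sup>+x. ennreal (f x * g x) \<partial>M) = (\<integral>\<^sup>+x. ennreal (f x * real_cond_exp M F g x) \<partial>M)"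
    by (rule nn_integral_mult_real_cond_exp[OF _ f_nonneg g g_nonneg]) simp
  also have "(\<integral>\<^sup>+x. ennreal (f x * real_cond_exp M F g x) \<partial>M) + (\<integral>\<^sup>+x. ennreal (h x) \<partial>M)
      = (\<integral>\<^sup>+x. ennreal (f x * real_cond_exp M F g x) + ennreal (h x) \<partial>M)"
    by (rule nn_integral_add[symmetric]) measurable
  also have "\<dots> = (\<integral>\<^sup>+x. ennreal (f x * real_cond_exp M F g x + h x) \<partial>M)"
    by (rule nn_integral_cong_AE) (use cond_nonneg in \<open>eventually_elim, simp add: ennreal_plus f_nonneg h_nonneg\<close>)
  finally show ?thesis .
qed

lemma integral_eq_0_of_centered_factor:
  assumes [measurable]: "f \<in> borel_measurable F" "g \<in> borel_measurable M"
    and centered: "AE x in M. real_cond_exp M F g x = 0"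
    and product: "AE x in M. h x = f x * g x"
  shows "integral\<^sup>L M h = 0"
proof (cases "integrable M h")
  case True
  have [measurable]: "f \<in> borel_measurable M" by (rule measurable_from_subalg[OF subalg]) simp
  have [measurable]: "h \<in> borel_measurable M" using True by auto
  have "integrable M (\<lambda>x. f x * g x)"
    using integrable_cong_AE_imp[OF True _ product] by simp
  have "integral\<^sup>L M h = (\<integral>x. f x * g x \<partial>M)"
    by (rule integral_cong_AE) (simp_all add: product)
  also have "\<dots> = (\<integral>x. f x * real_cond_exp M F g x \<partial>M)"
    by (rule real_cond_exp_intg(2)[symmetric]) (simp_all add: \<open>integrable M (\<lambda>x. f x * g x)\<close>)
  also have "\<dots> = 0"
    by (rule integral_eq_zero_AE) (use centered in \<open>eventually_elim, simp\<close>)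
  finally show ?thesis .
qed (simp add: not_integrable_integral_eq)

lemma real_cond_exp_square_add_centered:
  fixes Z D :: "'a \<Rightarrow> real"
  assumes "finite_measure M"
    and [measurable]: "Z \<in> borel_measurable M" and D_F [measurable]: "D \<in> borel_measurable F"
    and Z2: "integrable M (\<lambda>x. (Z x)\<^sup>2)" and D2: "integrable M (\<lambda>x. (D x)\<^sup>2)"
    and centered: "AE x in M. real_cond_exp M F Z x = 0"
  shows "AE x in M. real_cond_exp M F (\<lambda>x. (Z x + D x)\<^sup>2) x
                  = real_cond_exp M F (\<lambda>x. (Z x)\<^sup>2) x + (D x)\<^sup>2"
proof -
  interpret finite_measure M by fact
  have [measurable]: "D \<in> borel_measurable M" by (rule measurable_from_subalg[OF subalg D_F])
  have Z: "integrable M Z" by (rule square_integrable_imp_integrable[OF _ Z2]) simp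
  have D: "integrable M D" by (rule square_integrable_imp_integrable[OF _ D2]) simp
  have "integrable M (\<lambda>x. (2 * Z x + D x)\<^sup>2)"
    by (rule square_integrable_add[OF _ _ _ D2]) (use Z2 in \<open>simp_all add: power_mult_distrib\<close>)
  then have cross: "integrable M (\<lambda>x. D x * (2 * Z x + D x))"
    by (intro integrable_mult_of_square_integrable[OF _ _ D2]) simp_all
  have expand: "(\<lambda>x. (Z x + D x)\<^sup>2) = (\<lambda>x. (Z x)\<^sup>2 + D x * (2 * Z x + D x))"
    by (simp add: fun_eq_iff power2_eq_square algebra_simps)
  have "AE x in M. real_cond_exp M F (\<lambda>x. (Z x)\<^sup>2 + D x * (2 * Z x + D x)) x
      = real_cond_exp M F (\<lambda>x. (Z x)\<^sup>2) x + real_cond_exp M F (\<lambda>x. D x * (2 * Z x + D x)) x"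
    by (rule real_cond_exp_add[OF Z2 cross])
  moreover have "AE x in M. real_cond_exp M F (\<lambda>x. D x * (2 * Z x + D x)) x
      = D x * real_cond_exp M F (\<lambda>x. 2 * Z x + D x) x"
    by (rule real_cond_exp_mult[OF D_F _ cross]) simp
  moreover have "AE x in M. real_cond_exp M F (\<lambda>x. 2 * Z x + D x) x
      = real_cond_exp M F (\<lambda>x. 2 * Z x) x + real_cond_exp M F D x"
    by (rule real_cond_exp_add[OF _ D]) (use Z in simp)
  moreover have "AE x in M. real_cond_exp M F (\<lambda>x. 2 * Z x) x = 2 * real_cond_exp M F Z x"
    by (rule real_cond_exp_cmult[OF Z])
  moreover have "AE x in M. real_cond_exp M F D x = D x"
    by (rule real_cond_exp_F_meas[OF D D_F])
  ultimately show ?thesis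
    unfolding expand using centered by eventually_elim (simp add: power2_eq_square)
qed

end

lemma open_sdom: "open (sdom a)"
  unfolding sdom_def by (rule open_Collect_less) (auto intro: continuous_intros)

locale location_scale_model = prob_space M
  for M :: "'w measure" and X :: "'w \<Rightarrow> real^'k" and Y :: "'w \<Rightarrow> real"
    and a :: ereal and s s1 :: "real \<Rightarrow> real" and \<beta>0 \<gamma>0 :: "real^'k" +
  assumes Y_measurable [measurable]: "Y \<in> borel_measurable M"
    and X_measurable [measurable]: "X \<in> borel_measurable M"
    and s_pos: "\<And>t. t \<in> sdom a \<Longrightarrow> 0 < s t"
    and s_continuous: "continuous_on (sdom a) s"
    and s1_continuous: "continuous_on (sdom a) s1"
    and s_inj: "inj_on s (sdom a)"
    and sigma2_bounded_below: "\<exists>c>0. AE w in M. c \<le> sigma2X M X Y w"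
    and Y_power4: "integrable M (\<lambda>w. Y w ^ 4)"
    and X_norm_power4: "integrable M (\<lambda>w. norm (X w) ^ 4)"
    and s_power4: "\<And>\<gamma>. \<gamma> \<in> Theta_gamma M X a s \<Longrightarrow> integrable M (\<lambda>w. s (X w \<bullet> \<gamma>) ^ 4)"
    and design_integrable: "\<And>i j. integrable M (\<lambda>w. X w $ i * X w $ j / s (X w \<bullet> \<gamma>0))"
    and design_invertible: "invertible (\<chi> i j. \<integral>w. X w $ i * X w $ j / s (X w \<bullet> \<gamma>0) \<partial>M)"
    and \<gamma>0_admissible: "\<gamma>0 \<in> Theta_gamma M X a s"
    and cond_mean: "AE w in M. muX M X Y w = X w \<bullet> \<beta>0"
    and cond_var: "AE w in M. sigma2X M X Y w = (s (X w \<bullet> \<gamma>0))\<^sup>2"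
begin

sublocale sigma_finite_subalgebra M "sigX M X"
proof (rule finite_measure_subalgebra_is_sigma_finite)
  have "subalgebra M (sigX M X)"
    unfolding subalgebra_def sigX_def using sets_image_in_sets[OF refl X_measurable] by simp
  then show "finite_measure_subalgebra M (sigX M X)"
    by (simp add: finite_measure_subalgebra_def finite_measure_subalgebra_axioms_def finite_measure_axioms)
qed

lemma X_measurable_sigX [measurable]: "X \<in> borel_measurable (sigX M X)"
  unfolding sigX_def by (rule measurable_vimage_algebra1) simp

lemma measurable_sigX_sdom_if:
  assumes "continuous_on (sdom a) f"
  shows "(\<lambda>w. if X w \<bullet> \<gamma> \<in> sdom a then f (X w \<bullet> \<gamma>) else c) \<in> borel_measurable (sigX M X)"
proof -
  have "(\<lambda>t. if t \<in> sdom a then f t else c) \<in> borel_measurable borel"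
    by (rule borel_measurable_continuous_on_if) (simp_all add: open_sdom assms)
  moreover have "(\<lambda>w. X w \<bullet> \<gamma>) \<in> borel_measurable (sigX M X)" by measurable
  ultimately show ?thesis by (rule measurable_compose[rotated])
qed

text \<open>The random variable \<open>s(X'\<gamma>)\<close>, with the junk value 1 where \<open>X'\<gamma>\<close> leaves the domain of \<open>s\<close>
  (a null set for admissible \<open>\<gamma>\<close>), so that it is positive and \<open>X\<close>-measurable everywhere.\<close>
definition scale :: "real^'k \<Rightarrow> 'w \<Rightarrow> real" where
  "scale \<gamma> w = (if X w \<bullet> \<gamma> \<in> sdom a then s (X w \<bullet> \<gamma>) else 1)"

definition scale_deriv :: "real^'k \<Rightarrow> 'w \<Rightarrow> real" where
  "scale_deriv \<gamma> w = (if X w \<bullet> \<gamma> \<in> sdom a then s1 (X w \<bullet> \<gamma>) else 0)"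

definition err :: "'w \<Rightarrow> real" where
  "err w = Y w - X w \<bullet> \<beta>0"

abbreviation \<sigma>0 :: "'w \<Rightarrow> real" where
  "\<sigma>0 \<equiv> scale \<gamma>0"

definition cond_var_err_square :: "'w \<Rightarrow> real" where
  "cond_var_err_square = real_cond_exp M (sigX M X) (\<lambda>w. ((err w)\<^sup>2 - (\<sigma>0 w)\<^sup>2)\<^sup>2)"

lemma scale_measurable_sigX [measurable]: "scale \<gamma> \<in> borel_measurable (sigX M X)"
  unfolding scale_def[abs_def] by (rule measurable_sigX_sdom_if[OF s_continuous])

lemma scale_deriv_measurable_sigX [measurable]: "scale_deriv \<gamma> \<in> borel_measurable (sigX M X)"
  unfolding scale_deriv_def[abs_def] by (rule measurable_sigX_sdom_if[OF s1_continuous])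

lemma scale_measurable [measurable]: "scale \<gamma> \<in> borel_measurable M"
  by (rule measurable_from_subalg[OF subalg scale_measurable_sigX])

lemma err_measurable [measurable]: "err \<in> borel_measurable M"
  unfolding err_def[abs_def] by measurable

lemma X_component_measurable_sigX [measurable]: "(\<lambda>w. X w $ i) \<in> borel_measurable (sigX M X)"
  by (rule measurable_compose[OF X_measurable_sigX borel_measurable_nth])

lemma muX_measurable [measurable]: "muX M X Y \<in> borel_measurable M"
  unfolding muX_def by (rule borel_measurable_cond_exp2)

lemma cond_var_err_square_measurable [measurable]: "cond_var_err_square \<in> borel_measurable M"
  unfolding cond_var_err_square_def by (rule borel_measurable_cond_exp2)

lemma scale_pos: "0 < scale \<gamma> w"
  by (simp add: scale_def s_pos)

lemma scale_nonneg [simp]: "0 \<le> scale \<gamma> w"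
  using scale_pos[of \<gamma> w] by simp

lemma scale_neq_0 [simp]: "scale \<gamma> w \<noteq> 0"
  using scale_pos[of \<gamma> w] by simp

lemma AE_in_sdom:
  assumes "\<gamma> \<in> Theta_gamma M X a s"
  shows "AE w in M. X w \<bullet> \<gamma> \<in> sdom a"
proof -
  have "prob {w \<in> space M. X w \<bullet> \<gamma> \<in> sdom a \<and> 0 < s (X w \<bullet> \<gamma>)} = 1"
    using assms by (simp add: Theta_gamma_def)
  from AE_prob_1[OF this] show ?thesis
    by eventually_elim simp
qed

lemma AE_s_eq_scale:
  assumes "\<gamma> \<in> Theta_gamma M X a s"
  shows "AE w in M. s (X w \<bullet> \<gamma>) = scale \<gamma> w"
  using AE_in_sdom[OF assms] by eventually_elim (simp add: scale_def)

lemma sigmaX_eq_scale: "AE w in M. sigmaX M X Y w = \<sigma>0 w"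
  using cond_var AE_s_eq_scale[OF \<gamma>0_admissible]
  by eventually_elim (simp add: sigmaX_def scale_pos less_imp_le)

lemma scale0_bounded_below: "\<exists>c>0. AE w in M. c \<le> \<sigma>0 w"
proof -
  obtain c where "0 < c" and c: "AE w in M. c \<le> sigma2X M X Y w"
    using sigma2_bounded_below by blast
  have "AE w in M. sqrt c \<le> \<sigma>0 w"
    using c cond_var AE_s_eq_scale[OF \<gamma>0_admissible]
  proof eventually_elim
    case (elim w)
    then have "c \<le> (\<sigma>0 w)\<^sup>2" by simp
    then have "sqrt c \<le> sqrt ((\<sigma>0 w)\<^sup>2)" by (rule real_sqrt_le_mono)
    then show ?case using scale_pos[of \<gamma>0 w] by simp
  qed
  with \<open>0 < c\<close> show ?thesis by (intro exI[of _ "sqrt c"]) simp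
qed

lemma beta_identified:
  assumes "AE w in M. X w \<bullet> v = 0"
  shows "v = 0"
  using vector_eq_0_of_AE_inner_eq_0[OF _ design_invertible assms] design_integrable by blast

lemma gamma_identified:
  assumes \<gamma>: "\<gamma> \<in> Theta_gamma M X a s" and eq: "AE w in M. scale \<gamma> w = \<sigma>0 w"
  shows "\<gamma> = \<gamma>0"
proof -
  have "AE w in M. X w \<bullet> (\<gamma> - \<gamma>0) = 0"
    using AE_in_sdom[OF \<gamma>] AE_in_sdom[OF \<gamma>0_admissible] eq
  proof eventually_elim
    case (elim w)
    then have "s (X w \<bullet> \<gamma>) = s (X w \<bullet> \<gamma>0)" by (simp add: scale_def)
    with elim have "X w \<bullet> \<gamma> = X w \<bullet> \<gamma>0" using s_inj by (meson inj_onD)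
    then show ?case by (simp add: inner_diff_right)
  qed
  then show ?thesis using beta_identified by fastforce
qed

lemma integrable_inner_power4: "integrable M (\<lambda>w. (X w \<bullet> v) ^ 4)"
proof (rule Bochner_Integration.integrable_bound)
  show "integrable M (\<lambda>w. norm (X w) ^ 4 * norm v ^ 4)"
    using X_norm_power4 by simp
  show "AE w in M. norm ((X w \<bullet> v) ^ 4) \<le> norm (norm (X w) ^ 4 * norm v ^ 4)"
  proof (rule AE_I2)
    fix w
    have "\<bar>X w \<bullet> v\<bar> ^ 4 \<le> (norm (X w) * norm v) ^ 4"
      by (rule power_mono[OF Cauchy_Schwarz_ineq2]) simp
    then show "norm ((X w \<bullet> v) ^ 4) \<le> norm (norm (X w) ^ 4 * norm v ^ 4)"
      by (simp add: power_abs power_mult_distrib)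
  qed
qed measurable

lemma integrable_inner_square: "integrable M (\<lambda>w. (X w \<bullet> v)\<^sup>2)"
  by (rule power4_integrable_imp_square_integrable[OF _ integrable_inner_power4]) measurable

lemma integrable_inner: "integrable M (\<lambda>w. X w \<bullet> v)"
  by (rule square_integrable_imp_integrable[OF _ integrable_inner_square]) measurable

lemma integrable_err_power4: "integrable M (\<lambda>w. err w ^ 4)"
proof -
  have "integrable M (\<lambda>w. (Y w + X w \<bullet> (- \<beta>0)) ^ 4)"
    by (rule power4_integrable_add[OF _ _ Y_power4 integrable_inner_power4]) measurable
  then show ?thesis by (simp add: err_def)
qed

lemma integrable_err_square: "integrable M (\<lambda>w. (err w)\<^sup>2)"
  by (rule power4_integrable_imp_square_integrable[OF err_measurable integrable_err_power4])

lemma integrable_scale_power4: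
  assumes "\<gamma> \<in> Theta_gamma M X a s"
  shows "integrable M (\<lambda>w. scale \<gamma> w ^ 4)"
proof (rule integrable_cong_AE_imp[OF s_power4[OF assms]])
  show "AE w in M. s (X w \<bullet> \<gamma>) ^ 4 = scale \<gamma> w ^ 4"
    using AE_s_eq_scale[OF assms] by eventually_elim simp
qed measurable

lemma integrable_scale_square:
  assumes "\<gamma> \<in> Theta_gamma M X a s"
  shows "integrable M (\<lambda>w. (scale \<gamma> w)\<^sup>2)"
  by (rule power4_integrable_imp_square_integrable[OF scale_measurable integrable_scale_power4[OF assms]])

lemma integrable_scale0: "integrable M \<sigma>0"
  by (rule square_integrable_imp_integrable[OF scale_measurable integrable_scale_square[OF \<gamma>0_admissible]])

lemma resid_eq_err_add: "Y w - X w \<bullet> \<beta> = err w + X w \<bullet> (\<beta>0 - \<beta>)"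
  by (simp add: err_def inner_diff_right)

lemma integrable_square_resid: "integrable M (\<lambda>w. (Y w - X w \<bullet> \<beta>)\<^sup>2)"
  unfolding resid_eq_err_add
  by (rule square_integrable_add[OF _ _ integrable_err_square integrable_inner_square]) measurable

lemma cond_exp_err: "AE w in M. real_cond_exp M (sigX M X) err w = 0"
proof -
  have "integrable M (\<lambda>w. (Y w)\<^sup>2)"
    by (rule power4_integrable_imp_square_integrable[OF Y_measurable Y_power4])
  then have Y: "integrable M Y" by (rule square_integrable_imp_integrable[OF Y_measurable])
  have "err = (\<lambda>w. Y w - X w \<bullet> \<beta>0)" by (simp add: fun_eq_iff err_def)
  then have "AE w in M. real_cond_exp M (sigX M X) err w
      = real_cond_exp M (sigX M X) Y w - real_cond_exp M (sigX M X) (\<lambda>w. X w \<bullet> \<beta>0) w"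
    using real_cond_exp_diff[OF Y integrable_inner] by simp
  moreover have "AE w in M. real_cond_exp M (sigX M X) (\<lambda>w. X w \<bullet> \<beta>0) w = X w \<bullet> \<beta>0"
    by (rule real_cond_exp_F_meas[OF integrable_inner]) measurable
  ultimately show ?thesis
    using cond_mean unfolding muX_def by eventually_elim simp
qed

lemma cond_exp_err_square: "AE w in M. real_cond_exp M (sigX M X) (\<lambda>w. (err w)\<^sup>2) w = (\<sigma>0 w)\<^sup>2"
proof -
  have "AE w in M. (Y w - muX M X Y w)\<^sup>2 = (err w)\<^sup>2"
    using cond_mean by eventually_elim (simp add: err_def)
  then have "AE w in M. sigma2X M X Y w = real_cond_exp M (sigX M X) (\<lambda>w. (err w)\<^sup>2) w"
    unfolding sigma2X_def by (rule real_cond_exp_cong) measurable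
  then show ?thesis
    using cond_var AE_s_eq_scale[OF \<gamma>0_admissible] by eventually_elim simp
qed

lemma cond_exp_square_resid:
  "AE w in M. real_cond_exp M (sigX M X) (\<lambda>w. (Y w - X w \<bullet> \<beta>)\<^sup>2) w
      = (\<sigma>0 w)\<^sup>2 + (X w \<bullet> (\<beta>0 - \<beta>))\<^sup>2"
proof -
  have "AE w in M. real_cond_exp M (sigX M X) (\<lambda>w. (err w + X w \<bullet> (\<beta>0 - \<beta>))\<^sup>2) w
      = real_cond_exp M (sigX M X) (\<lambda>w. (err w)\<^sup>2) w + (X w \<bullet> (\<beta>0 - \<beta>))\<^sup>2"
    by (rule real_cond_exp_square_add_centered[OF finite_measure_axioms err_measurable _
          integrable_err_square integrable_inner_square cond_exp_err]) measurable
  then show ?thesis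
    unfolding resid_eq_err_add using cond_exp_err_square by eventually_elim simp
qed

lemma cond_exp_err_square_centered:
  "AE w in M. real_cond_exp M (sigX M X) (\<lambda>w. (err w)\<^sup>2 - (\<sigma>0 w)\<^sup>2) w = 0"
proof -
  note \<sigma>0_square = integrable_scale_square[OF \<gamma>0_admissible]
  have "AE w in M. real_cond_exp M (sigX M X) (\<lambda>w. (\<sigma>0 w)\<^sup>2) w = (\<sigma>0 w)\<^sup>2"
    by (rule real_cond_exp_F_meas[OF \<sigma>0_square]) measurable
  then show ?thesis
    using real_cond_exp_diff[OF integrable_err_square \<sigma>0_square] cond_exp_err_square
    by eventually_elim simp
qed

lemma cond_exp_square_dev:
  assumes \<gamma>: "\<gamma> \<in> Theta_gamma M X a s"
  shows "AE w in M. real_cond_exp M (sigX M X) (\<lambda>w. ((err w)\<^sup>2 - (scale \<gamma> w)\<^sup>2)\<^sup>2) w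
      = cond_var_err_square w + ((\<sigma>0 w)\<^sup>2 - (scale \<gamma> w)\<^sup>2)\<^sup>2"
proof -
  have "AE w in M. real_cond_exp M (sigX M X)
        (\<lambda>w. ((err w)\<^sup>2 - (\<sigma>0 w)\<^sup>2 + ((\<sigma>0 w)\<^sup>2 - (scale \<gamma> w)\<^sup>2))\<^sup>2) w
      = real_cond_exp M (sigX M X) (\<lambda>w. ((err w)\<^sup>2 - (\<sigma>0 w)\<^sup>2)\<^sup>2) w
        + ((\<sigma>0 w)\<^sup>2 - (scale \<gamma> w)\<^sup>2)\<^sup>2"
  proof (rule real_cond_exp_square_add_centered[OF finite_measure_axioms _ _ _ _ cond_exp_err_square_centered])
    show "integrable M (\<lambda>w. ((err w)\<^sup>2 - (\<sigma>0 w)\<^sup>2)\<^sup>2)"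
      by (rule square_integrable_diff_squares[OF _ _ integrable_err_power4
            integrable_scale_power4[OF \<gamma>0_admissible]]) measurable
    show "integrable M (\<lambda>w. ((\<sigma>0 w)\<^sup>2 - (scale \<gamma> w)\<^sup>2)\<^sup>2)"
      by (rule square_integrable_diff_squares[OF _ _ integrable_scale_power4[OF \<gamma>0_admissible]
            integrable_scale_power4[OF \<gamma>]]) measurable
  qed measurable
  then show ?thesis by (simp add: cond_var_err_square_def)
qed

lemma step1obj_eq:
  "step1obj M X Y \<beta> = (\<integral>\<^sup>+w. ennreal (\<sigma>0 w + (X w \<bullet> (\<beta>0 - \<beta>))\<^sup>2 / \<sigma>0 w) \<partial>M)"
proof -
  have weight: "(\<lambda>w. 1 / \<sigma>0 w) \<in> borel_measurable (sigX M X)" by measurable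
  have "step1obj M X Y \<beta> = (\<integral>\<^sup>+w. ennreal (1 / \<sigma>0 w * (Y w - X w \<bullet> \<beta>)\<^sup>2) \<partial>M)"
    unfolding step1obj_def
    by (rule nn_integral_cong_AE) (use sigmaX_eq_scale in \<open>eventually_elim, simp\<close>)
  also have "\<dots> = (\<integral>\<^sup>+w. ennreal (1 / \<sigma>0 w
                     * real_cond_exp M (sigX M X) (\<lambda>w. (Y w - X w \<bullet> \<beta>)\<^sup>2) w) \<partial>M)"
    by (rule nn_integral_mult_real_cond_exp[OF weight _ integrable_square_resid]) simp_all
  also have "\<dots> = (\<integral>\<^sup>+w. ennreal (\<sigma>0 w + (X w \<bullet> (\<beta>0 - \<beta>))\<^sup>2 / \<sigma>0 w) \<partial>M)"
    by (rule nn_integral_cong_AE)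
       (use cond_exp_square_resid[of \<beta>] in \<open>eventually_elim, simp add: field_simps power2_eq_square\<close>)
  finally show ?thesis .
qed

lemma Qobj_eq:
  assumes \<gamma>: "\<gamma> \<in> Theta_gamma M X a s"
  shows "Qobj M X Y s (\<beta>, \<gamma>) = (\<integral>\<^sup>+w. ennreal (\<sigma>0 w
           + ((scale \<gamma> w - \<sigma>0 w)\<^sup>2 + (X w \<bullet> (\<beta>0 - \<beta>))\<^sup>2) / (2 * scale \<gamma> w)) \<partial>M)"
proof -
  have weight: "(\<lambda>w. 1 / (2 * scale \<gamma> w)) \<in> borel_measurable (sigX M X)" by measurable
  have loss: "1/2 * ((r / S)\<^sup>2 + 1) * S = 1 / (2 * S) * r\<^sup>2 + S / 2" if "S \<noteq> 0" for S r :: real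
    using that by (simp add: power_divide field_simps power2_eq_square)
  have "Qobj M X Y s (\<beta>, \<gamma>)
      = (\<integral>\<^sup>+w. ennreal (1 / (2 * scale \<gamma> w) * (Y w - X w \<bullet> \<beta>)\<^sup>2 + scale \<gamma> w / 2) \<partial>M)"
    unfolding Qobj_def eres_def fst_conv snd_conv
  proof (rule nn_integral_cong_AE)
    show "AE w in M. ennreal (1/2 * (((Y w - X w \<bullet> \<beta>) / s (X w \<bullet> \<gamma>))\<^sup>2 + 1) * s (X w \<bullet> \<gamma>))
        = ennreal (1 / (2 * scale \<gamma> w) * (Y w - X w \<bullet> \<beta>)\<^sup>2 + scale \<gamma> w / 2)"
      using AE_s_eq_scale[OF \<gamma>]
    proof eventually_elim
      case (elim w)
      with loss[of "scale \<gamma> w" "Y w - X w \<bullet> \<beta>"] show ?case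
        by (simp only: scale_neq_0 simp_thms)
    qed
  qed
  also have "\<dots> = (\<integral>\<^sup>+w. ennreal (1 / (2 * scale \<gamma> w)
                     * real_cond_exp M (sigX M X) (\<lambda>w. (Y w - X w \<bullet> \<beta>)\<^sup>2) w + scale \<gamma> w / 2) \<partial>M)"
    by (rule nn_integral_mult_real_cond_exp_add[OF weight _ integrable_square_resid]) simp_all
  also have "\<dots> = (\<integral>\<^sup>+w. ennreal (\<sigma>0 w
           + ((scale \<gamma> w - \<sigma>0 w)\<^sup>2 + (X w \<bullet> (\<beta>0 - \<beta>))\<^sup>2) / (2 * scale \<gamma> w)) \<partial>M)"
    by (rule nn_integral_cong_AE)
       (use cond_exp_square_resid[of \<beta>] in \<open>eventually_elim, simp add: field_simps power2_eq_square\<close>)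
  finally show ?thesis .
qed

lemma step2obj_eq:
  assumes \<gamma>: "\<gamma> \<in> Theta_gamma M X a s"
  shows "step2obj M X Y s \<beta>0 \<gamma> = (\<integral>\<^sup>+w. ennreal (cond_var_err_square w / \<sigma>0 w ^ 3
           + ((\<sigma>0 w)\<^sup>2 - (scale \<gamma> w)\<^sup>2)\<^sup>2 / \<sigma>0 w ^ 3) \<partial>M)"
proof -
  have weight: "(\<lambda>w. 1 / \<sigma>0 w ^ 3) \<in> borel_measurable (sigX M X)" by measurable
  have "integrable M (\<lambda>w. ((err w)\<^sup>2 - (scale \<gamma> w)\<^sup>2)\<^sup>2)"
    by (rule square_integrable_diff_squares[OF _ _ integrable_err_power4 integrable_scale_power4[OF \<gamma>]])
       measurable
  note dev = this
  have "step2obj M X Y s \<beta>0 \<gamma> = (\<integral>\<^sup>+w. ennreal (1 / \<sigma>0 w ^ 3 * ((err w)\<^sup>2 - (scale \<gamma> w)\<^sup>2)\<^sup>2) \<partial>M)"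
    unfolding step2obj_def
    by (rule nn_integral_cong_AE)
       (use sigmaX_eq_scale AE_s_eq_scale[OF \<gamma>] in \<open>eventually_elim, simp add: err_def\<close>)
  also have "\<dots> = (\<integral>\<^sup>+w. ennreal (1 / \<sigma>0 w ^ 3
      * real_cond_exp M (sigX M X) (\<lambda>w. ((err w)\<^sup>2 - (scale \<gamma> w)\<^sup>2)\<^sup>2) w) \<partial>M)"
    by (rule nn_integral_mult_real_cond_exp[OF weight _ dev]) simp_all
  also have "\<dots> = (\<integral>\<^sup>+w. ennreal (cond_var_err_square w / \<sigma>0 w ^ 3
           + ((\<sigma>0 w)\<^sup>2 - (scale \<gamma> w)\<^sup>2)\<^sup>2 / \<sigma>0 w ^ 3) \<partial>M)"
    by (rule nn_integral_cong_AE)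
       (use cond_exp_square_dev[OF \<gamma>] in \<open>eventually_elim, simp add: add_divide_distrib\<close>)
  finally show ?thesis .
qed

lemma Qobj_strict_min:
  assumes \<theta>: "\<theta> \<in> Theta M X a s" and "\<theta> \<noteq> (\<beta>0, \<gamma>0)"
  shows "Qobj M X Y s (\<beta>0, \<gamma>0) < Qobj M X Y s \<theta>"
proof -
  obtain \<beta> \<gamma> where \<theta>_eq: "\<theta> = (\<beta>, \<gamma>)" and \<gamma>: "\<gamma> \<in> Theta_gamma M X a s"
    using \<theta> by (cases \<theta>) (auto simp: Theta_def)
  define excess where
    "excess w = ((scale \<gamma> w - \<sigma>0 w)\<^sup>2 + (X w \<bullet> (\<beta>0 - \<beta>))\<^sup>2) / (2 * scale \<gamma> w)" for w
  have "Qobj M X Y s (\<beta>0, \<gamma>0) = (\<integral>\<^sup>+w. ennreal (\<sigma>0 w) \<partial>M)"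
    using Qobj_eq[OF \<gamma>0_admissible, of \<beta>0] by simp
  also have "\<dots> < (\<integral>\<^sup>+w. ennreal (\<sigma>0 w + excess w) \<partial>M)"
  proof (rule nn_integral_less_add[OF _ _ integrable_scale0])
    show "AE w in M. 0 \<le> excess w"
      by (rule AE_I2) (simp add: excess_def)
    show "\<not> (AE w in M. excess w = 0)"
    proof
      assume "AE w in M. excess w = 0"
      then have both: "AE w in M. scale \<gamma> w = \<sigma>0 w \<and> X w \<bullet> (\<beta>0 - \<beta>) = 0"
        by eventually_elim (simp add: excess_def sum_power2_eq_zero_iff)
      have "\<gamma> = \<gamma>0"
        by (rule gamma_identified[OF \<gamma>]) (use both in \<open>eventually_elim, simp\<close>)
      moreover have "\<beta>0 - \<beta> = 0"
        by (rule beta_identified) (use both in \<open>eventually_elim, simp\<close>)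
      ultimately show False using assms(2) \<theta>_eq by simp
    qed
  qed (simp_all add: excess_def, measurable)
  also have "\<dots> = Qobj M X Y s \<theta>"
    using Qobj_eq[OF \<gamma>, of \<beta>] by (simp add: \<theta>_eq excess_def)
  finally show ?thesis .
qed

lemma step1obj_strict_min:
  assumes "\<beta> \<noteq> \<beta>0"
  shows "step1obj M X Y \<beta>0 < step1obj M X Y \<beta>"
proof -
  have "step1obj M X Y \<beta>0 = (\<integral>\<^sup>+w. ennreal (\<sigma>0 w) \<partial>M)"
    by (simp add: step1obj_eq)
  also have "\<dots> < (\<integral>\<^sup>+w. ennreal (\<sigma>0 w + (X w \<bullet> (\<beta>0 - \<beta>))\<^sup>2 / \<sigma>0 w) \<partial>M)"
  proof (rule nn_integral_less_add[OF _ _ integrable_scale0])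
    show "\<not> (AE w in M. (X w \<bullet> (\<beta>0 - \<beta>))\<^sup>2 / \<sigma>0 w = 0)"
    proof
      assume "AE w in M. (X w \<bullet> (\<beta>0 - \<beta>))\<^sup>2 / \<sigma>0 w = 0"
      then have "AE w in M. X w \<bullet> (\<beta>0 - \<beta>) = 0" by eventually_elim simp
      with assms show False using beta_identified by fastforce
    qed
  qed simp_all
  also have "\<dots> = step1obj M X Y \<beta>"
    by (simp add: step1obj_eq)
  finally show ?thesis .
qed

lemma step2obj_strict_min:
  assumes \<gamma>: "\<gamma> \<in> Theta_gamma M X a s" and "\<gamma> \<noteq> \<gamma>0"
  shows "step2obj M X Y s \<beta>0 \<gamma>0 < step2obj M X Y s \<beta>0 \<gamma>"
proof -
  let ?base = "\<lambda>w. cond_var_err_square w / \<sigma>0 w ^ 3"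
  have "step2obj M X Y s \<beta>0 \<gamma>0 = (\<integral>\<^sup>+w. ennreal (?base w) \<partial>M)"
    using step2obj_eq[OF \<gamma>0_admissible] by simp
  also have "\<dots> < (\<integral>\<^sup>+w. ennreal (?base w + ((\<sigma>0 w)\<^sup>2 - (scale \<gamma> w)\<^sup>2)\<^sup>2 / \<sigma>0 w ^ 3) \<partial>M)"
  proof (rule nn_integral_less_add)
    have nonneg: "AE w in M. 0 \<le> cond_var_err_square w"
      unfolding cond_var_err_square_def by (rule real_cond_exp_pos) simp_all
    then show "AE w in M. 0 \<le> ?base w"
      by eventually_elim simp
    \<comment> \<open>Assumption 2 is what keeps the second-step objective finite at the truth.\<close>
    obtain c where "0 < c" and c: "AE w in M. c \<le> \<sigma>0 w"
      using scale0_bounded_below by blast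
    show "integrable M ?base"
    proof (rule Bochner_Integration.integrable_bound)
      show "integrable M (\<lambda>w. cond_var_err_square w / c ^ 3)"
        unfolding cond_var_err_square_def by (intro integrable_divide real_cond_exp_int(1)
            square_integrable_diff_squares integrable_err_power4 integrable_scale_power4 \<gamma>0_admissible) measurable
      show "AE w in M. norm (?base w) \<le> norm (cond_var_err_square w / c ^ 3)"
        using c nonneg
      proof eventually_elim
        case (elim w)
        have "c ^ 3 \<le> \<sigma>0 w ^ 3" using elim \<open>0 < c\<close> by (intro power_mono) simp_all
        then show ?case
          using elim \<open>0 < c\<close> by (simp add: divide_left_mono mult_pos_pos)
      qed
    qed measurable
    show "\<not> (AE w in M. ((\<sigma>0 w)\<^sup>2 - (scale \<gamma> w)\<^sup>2)\<^sup>2 / \<sigma>0 w ^ 3 = 0)"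
    proof
      assume "AE w in M. ((\<sigma>0 w)\<^sup>2 - (scale \<gamma> w)\<^sup>2)\<^sup>2 / \<sigma>0 w ^ 3 = 0"
      then have "AE w in M. scale \<gamma> w = \<sigma>0 w"
        by eventually_elim (simp add: power2_eq_iff_nonneg)
      with assms show False using gamma_identified by blast
    qed
  qed simp_all
  also have "\<dots> = step2obj M X Y s \<beta>0 \<gamma>"
    using step2obj_eq[OF \<gamma>] by simp
  finally show ?thesis .
qed

lemma grad_step1_eq_0: "grad_step1 M X Y \<beta>0 = 0"
proof -
  have "(\<integral>w. -2 * X w $ i * (Y w - X w \<bullet> \<beta>0) / sigmaX M X Y w \<partial>M) = 0" for i
  proof (rule integral_eq_0_of_centered_factor[OF _ err_measurable cond_exp_err])
    show "(\<lambda>w. -2 * X w $ i / \<sigma>0 w) \<in> borel_measurable (sigX M X)" by measurable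
    show "AE w in M. -2 * X w $ i * (Y w - X w \<bullet> \<beta>0) / sigmaX M X Y w = -2 * X w $ i / \<sigma>0 w * err w"
      using sigmaX_eq_scale by eventually_elim (simp add: err_def)
  qed
  then show ?thesis by (simp add: grad_step1_def vec_eq_iff)
qed

lemma gradQ_beta_eq_0: "gradQ_beta M X Y s (\<beta>0, \<gamma>0) = 0"
proof -
  have "(\<integral>w. - X w $ i * eres s (Y w) (X w) (\<beta>0, \<gamma>0) \<partial>M) = 0" for i
  proof (rule integral_eq_0_of_centered_factor[OF _ err_measurable cond_exp_err])
    show "(\<lambda>w. - X w $ i / \<sigma>0 w) \<in> borel_measurable (sigX M X)" by measurable
    show "AE w in M. - X w $ i * eres s (Y w) (X w) (\<beta>0, \<gamma>0) = - X w $ i / \<sigma>0 w * err w"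
      using AE_s_eq_scale[OF \<gamma>0_admissible] by eventually_elim (simp add: eres_def err_def)
  qed
  then show ?thesis by (simp add: gradQ_beta_def vec_eq_iff)
qed

lemma grad_step2_eq_0: "grad_step2 M X Y s s1 \<beta>0 \<gamma>0 = 0"
proof -
  have "(\<integral>w. -4 * ((Y w - X w \<bullet> \<beta>0)\<^sup>2 - (s (X w \<bullet> \<gamma>0))\<^sup>2) * s (X w \<bullet> \<gamma>0) * s1 (X w \<bullet> \<gamma>0)
           * X w $ i / (sigmaX M X Y w) ^ 3 \<partial>M) = 0" for i
  proof (rule integral_eq_0_of_centered_factor[OF _ _ cond_exp_err_square_centered])
    show "(\<lambda>w. -4 * scale_deriv \<gamma>0 w * X w $ i / (\<sigma>0 w)\<^sup>2) \<in> borel_measurable (sigX M X)"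
      by measurable
    show "AE w in M. -4 * ((Y w - X w \<bullet> \<beta>0)\<^sup>2 - (s (X w \<bullet> \<gamma>0))\<^sup>2) * s (X w \<bullet> \<gamma>0) * s1 (X w \<bullet> \<gamma>0)
           * X w $ i / (sigmaX M X Y w) ^ 3
        = -4 * scale_deriv \<gamma>0 w * X w $ i / (\<sigma>0 w)\<^sup>2 * ((err w)\<^sup>2 - (\<sigma>0 w)\<^sup>2)"
      using AE_in_sdom[OF \<gamma>0_admissible] sigmaX_eq_scale
    proof eventually_elim
      case (elim w)
      then have "s (X w \<bullet> \<gamma>0) \<noteq> 0" using s_pos by force
      with elim show ?case
        by (simp add: scale_def scale_deriv_def err_def field_simps power2_eq_square power3_eq_cube)
    qed
  qed measurable
  then show ?thesis by (simp add: grad_step2_def vec_eq_iff)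
qed

lemma gradQ_gamma_eq_0: "gradQ_gamma M X Y s s1 (\<beta>0, \<gamma>0) = 0"
proof -
  have "(\<integral>w. 1/2 * (1 - (eres s (Y w) (X w) (\<beta>0, \<gamma>0))\<^sup>2) * s1 (X w \<bullet> snd (\<beta>0, \<gamma>0)) * X w $ i \<partial>M) = 0"
    for i
  proof (rule integral_eq_0_of_centered_factor[OF _ _ cond_exp_err_square_centered])
    show "(\<lambda>w. - 1/2 * scale_deriv \<gamma>0 w * X w $ i / (\<sigma>0 w)\<^sup>2) \<in> borel_measurable (sigX M X)"
      by measurable
    show "AE w in M. 1/2 * (1 - (eres s (Y w) (X w) (\<beta>0, \<gamma>0))\<^sup>2) * s1 (X w \<bullet> snd (\<beta>0, \<gamma>0)) * X w $ i
        = - 1/2 * scale_deriv \<gamma>0 w * X w $ i / (\<sigma>0 w)\<^sup>2 * ((err w)\<^sup>2 - (\<sigma>0 w)\<^sup>2)"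
      using AE_in_sdom[OF \<gamma>0_admissible]
    proof eventually_elim
      case (elim w)
      then have "s (X w \<bullet> \<gamma>0) \<noteq> 0" using s_pos by force
      with elim show ?case by (simp add: scale_def scale_deriv_def eres_def err_def power_divide field_simps)
    qed
  qed measurable
  then show ?thesis by (simp add: gradQ_gamma_def vec_eq_iff)
qed

end

theorem proposition1:
  fixes M :: "'w measure"
    and Y :: "'w \<Rightarrow> real"
    and X :: "'w \<Rightarrow> real^'k"
    and i1 :: 'k
    and a :: ereal
    and s s1 s2 s3 :: "real \<Rightarrow> real"
    and \<beta>0 \<gamma>0 :: "real^'k"
  assumes P: "prob_space M"
    and Ymeas: "Y \<in> borel_measurable M"
    and Xmeas: "X \<in> borel_measurable M"
    and X1: "\<forall>w\<in>space M. X w $ i1 = 1"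
    \<comment> \<open>Assumption 1\<close>
    and A1: "assumption1 a s s1 s2 s3"
    \<comment> \<open>Assumption 2\<close>
    and A2: "\<exists>c>0. AE w in M. sigma2X M X Y w \<ge> c"
    \<comment> \<open>Assumption 3 (i) and hypothesis (i)\<close>
    and A3i_Y: "integrable M (\<lambda>w. (Y w)^4)"
    and A3i_X: "integrable M (\<lambda>w. (norm (X w))^4)"
    \<comment> \<open>Assumption 3 (ii)\<close>
    and A3ii: "\<forall>\<gamma>\<in>Theta_gamma M X a s.
         integrable M (\<lambda>w. (norm (X w))^4 * (s2 (X w \<bullet> \<gamma>))^2) \<and>
         integrable M (\<lambda>w. (norm (X w))^6 * (s3 (X w \<bullet> \<gamma>))^2) \<and>
         integrable M (\<lambda>w. (norm (X w))^6 * (s1 (X w \<bullet> \<gamma>))^2 * (s2 (X w \<bullet> \<gamma>))^2)"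
    \<comment> \<open>Assumption 4: E[XX'/s(X'gamma)] exists and is nonsingular\<close>
    and A4: "\<forall>\<gamma>\<in>Theta_gamma M X a s.
         (\<forall>i j. integrable M (\<lambda>w. X w $ i * X w $ j / s (X w \<bullet> \<gamma>))) \<and>
         invertible (\<chi> i j. \<integral> w. X w $ i * X w $ j / s (X w \<bullet> \<gamma>) \<partial>M)"
    \<comment> \<open>hypothesis (i): E[s(X'gamma)^4] finite\<close>
    and Hs4: "\<forall>\<gamma>\<in>Theta_gamma M X a s. integrable M (\<lambda>w. (s (X w \<bullet> \<gamma>))^4)"
    \<comment> \<open>hypothesis (ii)\<close>
    and H0: "(\<beta>0, \<gamma>0) \<in> Theta M X a s"
    and Hmu: "AE w in M. muX M X Y w = X w \<bullet> \<beta>0"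
    and Hsig: "AE w in M. sigma2X M X Y w = (s (X w \<bullet> \<gamma>0))^2"
  shows
    \<comment> \<open>(beta0, gamma0) is the unique minimiser of Q over Theta\<close>
    "(\<forall>\<theta>\<in>Theta M X a s. \<theta> \<noteq> (\<beta>0, \<gamma>0) \<longrightarrow> Qobj M X Y s (\<beta>0, \<gamma>0) < Qobj M X Y s \<theta>)
     \<comment> \<open>first step: beta0 = argmin over R^k\<close>
     \<and> (\<forall>\<beta>. \<beta> \<noteq> \<beta>0 \<longrightarrow> step1obj M X Y \<beta>0 < step1obj M X Y \<beta>)
     \<comment> \<open>second step: gamma0 = argmin over Theta_gamma\<close>
     \<and> (\<forall>\<gamma>\<in>Theta_gamma M X a s. \<gamma> \<noteq> \<gamma>0 \<longrightarrow> step2obj M X Y s \<beta>0 \<gamma>0 < step2obj M X Y s \<beta>0 \<gamma>)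
     \<comment> \<open>first-order conditions of both steps hold at (beta0, gamma0)\<close>
     \<and> grad_step1 M X Y \<beta>0 = 0
     \<and> grad_step2 M X Y s s1 \<beta>0 \<gamma>0 = 0
     \<comment> \<open>and coincide there with the first-order conditions of Q\<close>
     \<and> gradQ_beta M X Y s (\<beta>0, \<gamma>0) = (1/2) *\<^sub>R grad_step1 M X Y \<beta>0
     \<and> gradQ_gamma M X Y s s1 (\<beta>0, \<gamma>0) = (1/8) *\<^sub>R grad_step2 M X Y s s1 \<beta>0 \<gamma>0"
proof -
  have s_pos: "\<forall>t\<in>sdom a. 0 < s t" and s_mono: "strict_mono_on (sdom a) s"
    and s_deriv: "\<forall>t\<in>sdom a. (s has_real_derivative s1 t) (at t)"
    and s1_deriv: "\<forall>t\<in>sdom a. (s1 has_real_derivative s2 t) (at t)"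
    using A1 unfolding assumption1_def by auto
  have \<gamma>0: "\<gamma>0 \<in> Theta_gamma M X a s"
    using H0 by (simp add: Theta_def)
  interpret location_scale_model M X Y a s s1 \<beta>0 \<gamma>0
  proof (intro location_scale_model.intro location_scale_model_axioms.intro)
    show "continuous_on (sdom a) s" "continuous_on (sdom a) s1"
      using s_deriv s1_deriv by (meson DERIV_isCont continuous_at_imp_continuous_on)+
    show "inj_on s (sdom a)"
      using s_mono by (rule strict_mono_on_imp_inj_on)
    show "0 < s t" if "t \<in> sdom a" for t
      using s_pos that by blast
    show "integrable M (\<lambda>w. s (X w \<bullet> \<gamma>) ^ 4)" if "\<gamma> \<in> Theta_gamma M X a s" for \<gamma>
      using Hs4 that by blast
    show "integrable M (\<lambda>w. X w $ i * X w $ j / s (X w \<bullet> \<gamma>0))" for i j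
      using A4 \<gamma>0 by blast
    show "invertible (\<chi> i j. \<integral>w. X w $ i * X w $ j / s (X w \<bullet> \<gamma>0) \<partial>M)"
      using A4 \<gamma>0 by blast
  qed (fact P Ymeas Xmeas A2 A3i_Y A3i_X \<gamma>0 Hmu Hsig)+
  show ?thesis
    by (simp add: Qobj_strict_min step1obj_strict_min step2obj_strict_min
        grad_step1_eq_0 grad_step2_eq_0 gradQ_beta_eq_0 gradQ_gamma_eq_0)
qed

end
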